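(* Let $K\ge2$, $a,b\ge1$ be integers. For any scheme with uncoded cache placement for the $(K,a,b)$ coded caching problem for location-based content, with load $R$, one has $$R\ \ge\ \frac{1}{a}\,\alpha_0+\frac{K-1}{2aK}\,\alpha_1 .$$
   Context: For integers $x\le y$, $[x:y]=\{x,x+1,\dots,y\}$ and $[n]=[1:n]$. For integers $c$ and $m\ge1$, $\langle c\rangle_m$ denotes the unique element of $\{1,\dots,m\}$ congruent to $c$ modulo $m$. The $(K,a,b)$ coded caching problem for location-based content: a server has $N=K(a+b)$ files $W_1,\dots,W_N$, each consisting of $B$ independent uniformly distributed bits. There are $K$ cache nodes, each storing $MB$ bits, and $K$ users, user $k$ having free access to cache node $k$ only. For $k\in[K]$ define $\mathcal D_{k,1}=[(k-1)(a+b)+1:ka+(k-1)b]$, $\mathcal D_{k,2}=[ka+(k-1)b+1:k(a+b)]$, $\mathcal D_{k,3}=\mathcal D_{\langle k+1\rangle_K,1}$, and $\mathcal D_k=\mathcal D_{k,1}\cup\mathcal D_{k,2}\cup\mathcal D_{k,3}$. A scheme consists of placement $Z_k=\phi_k(W_1,\dots,W_N)\in\{0,1\}^{MB}$ (fixed before demands), for each demand vector $\mathbf d\in\mathcal D_1\times\cdots\times\mathcal D_K$ a broadcast message $X=\psi(\mathbf d,W_1,\dots,W_N)\in\{0,1\}^{RB}$, and decoders such that user $k$ recovers $W_{d_k}$ exactly from $(\mathbf d,Z_k,X)$. The placement is uncoded if each $Z_k$ is a subset of the file bits copied directly. For uncoded placement, for $i\in[N]$ and $\mathcal T\subseteq[K]$,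 $W_{i,\mathcal T}$ denotes the set of bits of $W_i$ stored in exactly the cache nodes in $\mathcal T$ (and in no other cache node), and $|W_{i,\mathcal T}|$ its number of bits. Let $\mathcal C_1=\bigcup_{k\in[K]}\mathcal D_{k,1}$, and define $\alpha_0=\sum_{i\in\mathcal C_1}|W_{i,\emptyset}|/B$, $\alpha_1=\sum_{i\in\mathcal C_1}\sum_{j\in[K]}|W_{i,\{j\}}|/B$. *)

theory Defs
  imports Complex_Main
begin

text \<open>Cyclic index: the unique element of {1..m} congruent to c modulo m (c \<ge> 1, m \<ge> 1).\<close>
definition cyc :: "nat \<Rightarrow> nat \<Rightarrow> nat" where
  "cyc m c = ((c + m - 1) mod m) + 1"

definition D1 :: "nat \<Rightarrow> nat \<Rightarrow> nat \<Rightarrow> nat set" where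
  "D1 a b k = {(k-1)*(a+b)+1 .. k*a+(k-1)*b}"

definition D2 :: "nat \<Rightarrow> nat \<Rightarrow> nat \<Rightarrow> nat set" where
  "D2 a b k = {k*a+(k-1)*b+1 .. k*(a+b)}"

definition D3 :: "nat \<Rightarrow> nat \<Rightarrow> nat \<Rightarrow> nat \<Rightarrow> nat set" where
  "D3 K a b k = D1 a b (cyc K (k+1))"

definition Dem :: "nat \<Rightarrow> nat \<Rightarrow> nat \<Rightarrow> nat \<Rightarrow> nat set" where
  "Dem K a b k = D1 a b k \<union> D2 a b k \<union> D3 K a b k"

definition C1 :: "nat \<Rightarrow> nat \<Rightarrow> nat \<Rightarrow> nat set" where
  "C1 K a b = (\<Union>k\<in>{1..K}. D1 a b k)"

text \<open>A file library: file i (i \<in> [N]) is the bit string j \<mapsto> W i j, j < B.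
  Bits outside the library are normalized to False.\<close>
definition valid_files :: "nat \<Rightarrow> nat \<Rightarrow> (nat \<Rightarrow> nat \<Rightarrow> bool) \<Rightarrow> bool" where
  "valid_files N B W \<longleftrightarrow> (\<forall>i j. (i \<notin> {1..N} \<or> j \<ge> B) \<longrightarrow> \<not> W i j)"

text \<open>Uncoded placement: cache node k stores exactly the file bits at positions S k
  (pairs (file, bit index)). Its content is the restriction of the library to S k.\<close>
definition cache_content :: "(nat \<Rightarrow> (nat \<times> nat) set) \<Rightarrow> (nat \<Rightarrow> nat \<Rightarrow> bool) \<Rightarrow> nat \<Rightarrow> (nat \<times> nat \<Rightarrow> bool)" where
  "cache_content S W k = (\<lambda>p. if p \<in> S k then W (fst p) (snd p) else False)"

text \<open>A (zero-error) scheme with uncoded placement S, cache size M*B bits,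
  message length L bits (load R = L/B), encoder psi and decoders dec, for the
  (K,a,b) location-based coded caching problem with N = K(a+b) files of B bits.\<close>
definition uncoded_scheme ::
  "nat \<Rightarrow> nat \<Rightarrow> nat \<Rightarrow> nat \<Rightarrow> real \<Rightarrow> nat \<Rightarrow> (nat \<Rightarrow> (nat \<times> nat) set)
   \<Rightarrow> ((nat \<Rightarrow> nat) \<Rightarrow> (nat \<Rightarrow> nat \<Rightarrow> bool) \<Rightarrow> bool list)
   \<Rightarrow> (nat \<Rightarrow> (nat \<Rightarrow> nat) \<Rightarrow> (nat \<times> nat \<Rightarrow> bool) \<Rightarrow> bool list \<Rightarrow> nat \<Rightarrow> bool) \<Rightarrow> bool" where
  "uncoded_scheme K a b B M L S psi dec \<longleftrightarrow>
     (\<forall>k\<in>{1..K}. S k \<subseteq> {1..K*(a+b)} \<times> {..<B} \<and> real (card (S k)) \<le> M * real B) \<and>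
     (\<forall>d W. (\<forall>k\<in>{1..K}. d k \<in> Dem K a b k) \<longrightarrow> valid_files (K*(a+b)) B W \<longrightarrow>
        length (psi d W) = L \<and>
        (\<forall>k\<in>{1..K}. \<forall>j<B. dec k d (cache_content S W k) (psi d W) j = W (d k) j))"

text \<open>|W_{i,T}| for T = {} and T = {j}: number of bits of file i stored in no cache /
  exactly in cache j among caches 1..K.\<close>
definition bits_none :: "nat \<Rightarrow> nat \<Rightarrow> (nat \<Rightarrow> (nat \<times> nat) set) \<Rightarrow> nat \<Rightarrow> nat" where
  "bits_none K B S i = card {t. t < B \<and> (\<forall>k\<in>{1..K}. (i,t) \<notin> S k)}"

definition bits_only :: "nat \<Rightarrow> nat \<Rightarrow> (nat \<Rightarrow> (nat \<times> nat) set) \<Rightarrow> nat \<Rightarrow> nat \<Rightarrow> nat" where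
  "bits_only K B S i j = card {t. t < B \<and> (i,t) \<in> S j \<and> (\<forall>k\<in>{1..K}-{j}. (i,t) \<notin> S k)}"

definition alpha0 :: "nat \<Rightarrow> nat \<Rightarrow> nat \<Rightarrow> nat \<Rightarrow> (nat \<Rightarrow> (nat \<times> nat) set) \<Rightarrow> real" where
  "alpha0 K a b B S = (\<Sum>i\<in>C1 K a b. real (bits_none K B S i)) / real B"

definition alpha1 :: "nat \<Rightarrow> nat \<Rightarrow> nat \<Rightarrow> nat \<Rightarrow> (nat \<Rightarrow> (nat \<times> nat) set) \<Rightarrow> real" where
  "alpha1 K a b B S = (\<Sum>i\<in>C1 K a b. \<Sum>j\<in>{1..K}. real (bits_only K B S i j)) / real B"

end

theory Submission
  imports Defs
begin

(* Fix a demand vector d and a ranking of the users, and consider the bits that some user v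
   demands but that no user ranked at or below v has cached. Decoding the users in order of
   rank, every cached bit a user needs from this set has already been recovered, so the
   broadcast message determines the whole set: it has at most L bits.
   Now average over 2aK such demand/ranking pairs: every user asks for the r-th file of its
   own D1 block or of its successor's, and the ranks run through the K cyclic rotations,
   forwards in the first case and backwards in the second. A bit of a file in D1 u that is
   cached nowhere is counted by 2K of them; one cached only at node j is counted by
   (j - u) mod K + (u - 1 - j) mod K = K - 1 of them. *)

lemma bij_betw_add_mod:
  fixes K p :: int
  assumes "0 < K"
  shows "bij_betw (\<lambda>s. (s + p) mod K) {0..<K} {0..<K}"
proof -
  have "inj_on (\<lambda>s. (s + p) mod K) {0..<K}"
  proof (rule inj_onI)
    fix s s' assume "s \<in> {0..<K}" "s' \<in> {0..<K}" "(s + p) mod K = (s' + p) mod K"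
    then have "((s + p) mod K - p) mod K = ((s' + p) mod K - p) mod K" by simp
    then show "s = s'" using \<open>s \<in> {0..<K}\<close> \<open>s' \<in> {0..<K}\<close>
      by (simp add: mod_diff_left_eq mod_pos_pos_trivial)
  qed
  moreover have "(\<lambda>s. (s + p) mod K) ` {0..<K} \<subseteq> {0..<K}" using assms by auto
  ultimately show ?thesis
    by (simp add: bij_betw_def endo_inj_surj)
qed

lemma card_add_mod_less:
  fixes K p q :: int
  assumes K: "0 < K"
  shows "card {s \<in> {0..<K}. (s + p) mod K < (s + q) mod K} = nat ((p - q) mod K)"
proof -
  define e where "e = (q - p) mod K"
  have e: "0 \<le> e" "e < K" using K unfolding e_def by auto
  have shift: "(s + q) mod K = ((s + p) mod K + e) mod K" for s
    unfolding e_def by (simp add: mod_add_eq)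
  have "bij_betw (\<lambda>s. (s + p) mod K) {s \<in> {0..<K}. (s + p) mod K < (s + q) mod K}
          {x \<in> {0..<K}. x < (x + e) mod K}"
    by (rule bij_betw_Collect[OF bij_betw_add_mod[OF K]]) (simp add: shift)
  then have "card {s \<in> {0..<K}. (s + p) mod K < (s + q) mod K}
      = card {x \<in> {0..<K}. x < (x + e) mod K}"
    by (rule bij_betw_same_card)
  also have "{x \<in> {0..<K}. x < (x + e) mod K} = (if e = 0 then {} else {0..<K - e})"
  proof (cases "e = 0")
    case False
    have "x < (x + e) mod K \<longleftrightarrow> x < K - e" if "x \<in> {0..<K}" for x
    proof (cases "x + e < K")
      case True then show ?thesis using that e \<open>e \<noteq> 0\<close> by (simp add: mod_pos_pos_trivial)
    next
      case False
      have "(x + e) mod K = (x + e - K) mod K" by (metis diff_add_cancel mod_add_self2)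
      also have "\<dots> = x + e - K" using that e False by (intro mod_pos_pos_trivial) auto
      finally show ?thesis using e False by simp
    qed
    then show ?thesis using False e by auto
  qed (auto simp: mod_pos_pos_trivial)
  also have "card \<dots> = nat ((p - q) mod K)"
    using e unfolding e_def by (auto simp: zmod_zminus1_eq_if[of "q - p", simplified])
  finally show ?thesis .
qed

lemma mod_add_mod_minus_one:
  fixes x K :: int
  assumes "0 < K"
  shows "x mod K + (- x - 1) mod K = K - 1"
proof -
  have "- x - 1 = (K - 1 - x mod K) + (- (x div K) - 1) * K"
    using div_mult_mod_eq[of x K] by (simp add: algebra_simps)
  then have "(- x - 1) mod K = (K - 1 - x mod K) mod K"
    by (metis mod_mult_self1)
  also have "\<dots> = K - 1 - x mod K"
  proof (rule mod_pos_pos_trivial)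
    show "0 \<le> K - 1 - x mod K" "K - 1 - x mod K < K"
      using pos_mod_sign[OF assms, of x] pos_mod_bound[OF assms, of x] by linarith+
  qed
  finally show ?thesis by simp
qed

lemma card_le_length_if_inj_on_Pow:
  fixes f :: "'a set \<Rightarrow> bool list"
  assumes "finite F" and inj: "inj_on f (Pow F)" and len: "\<And>A. A \<subseteq> F \<Longrightarrow> length (f A) = L"
  shows "card F \<le> L"
proof -
  have "finite {xs :: bool list. length xs = L}"
    using finite_lists_length_eq[of "UNIV :: bool set" L] by simp
  moreover have "f ` Pow F \<subseteq> {xs. length xs = L}"
    using len by auto
  ultimately have "card (Pow F) \<le> card {xs :: bool list. length xs = L}"
    by (intro card_inj_on_le[OF inj])
  then have "(2::nat) ^ card F \<le> 2 ^ L"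
    using card_lists_length_eq[of "UNIV :: bool set" L] by (simp add: card_Pow assms(1))
  then show ?thesis by simp
qed

lemma cyc_in_range: "1 \<le> K \<Longrightarrow> cyc K c \<in> {1..K}"
  unfolding cyc_def using pos_mod_bound[of K] by (auto simp: Suc_le_eq)

lemma cyc_predecessor:
  assumes "u \<in> {1..K}"
  obtains v where "v \<in> {1..K}" "cyc K (v + 1) = u" "int v mod int K = (int u - 1) mod int K"
proof (cases "u = 1")
  case True
  then show ?thesis using assms by (intro that[of K]) (auto simp: cyc_def)
next
  case False
  obtain w where "u = Suc w" using assms by (cases u) auto
  then have "cyc K (u - 1 + 1) = u" using assms by (simp add: cyc_def)
  moreover have "u - 1 \<in> {1..K}" using False assms by auto
  ultimately show ?thesis using False by (intro that[of "u - 1"]) (auto simp: of_nat_diff)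
qed

lemma D1_union_D2: "1 \<le> k \<Longrightarrow> D1 a b k \<union> D2 a b k = {(k - 1) * (a + b) + 1 .. k * (a + b)}"
  by (cases k) (auto simp: D1_def D2_def algebra_simps)

lemma D1_D2_subset:
  assumes "k \<in> {1..K}"
  shows "D1 a b k \<union> D2 a b k \<subseteq> {1..K * (a + b)}"
  using assms mult_le_mono1[of k K "a + b"] by (auto simp: D1_union_D2)

lemma Dem_subset:
  assumes "k \<in> {1..K}"
  shows "Dem K a b k \<subseteq> {1..K * (a + b)}"
proof -
  have "cyc K (k + 1) \<in> {1..K}" using assms by (intro cyc_in_range) simp
  then show ?thesis
    using D1_D2_subset[OF assms] D1_D2_subset[of "cyc K (k + 1)" K a b]
    unfolding Dem_def D3_def by auto
qed

lemma C1_subset: "C1 K a b \<subseteq> {1..K * (a + b)}"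
  using D1_D2_subset unfolding C1_def by blast

definition d1_file :: "nat \<Rightarrow> nat \<Rightarrow> nat \<Rightarrow> nat \<Rightarrow> nat" where
  "d1_file a b k r = (k - 1) * (a + b) + r"

lemma d1_file_in_D1: "1 \<le> k \<Longrightarrow> r \<in> {1..a} \<Longrightarrow> d1_file a b k r \<in> D1 a b k"
  by (cases k) (auto simp: d1_file_def D1_def algebra_simps)

lemma D1_eq_d1_file:
  assumes "1 \<le> k" "i \<in> D1 a b k"
  obtains r where "r \<in> {1..a}" "i = d1_file a b k r"
proof
  show "i - (k - 1) * (a + b) \<in> {1..a}" "i = d1_file a b k (i - (k - 1) * (a + b))"
    using assms by (cases k; auto simp: d1_file_def D1_def algebra_simps)+
qed

definition stored_nowhere :: "nat \<Rightarrow> (nat \<Rightarrow> (nat \<times> nat) set) \<Rightarrow> nat \<times> nat \<Rightarrow> bool" where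
  "stored_nowhere K S \<beta> \<longleftrightarrow> (\<forall>k\<in>{1..K}. \<beta> \<notin> S k)"

definition stored_only_at :: "nat \<Rightarrow> (nat \<Rightarrow> (nat \<times> nat) set) \<Rightarrow> nat \<Rightarrow> nat \<times> nat \<Rightarrow> bool" where
  "stored_only_at K S j \<beta> \<longleftrightarrow> \<beta> \<in> S j \<and> (\<forall>k\<in>{1..K} - {j}. \<beta> \<notin> S k)"

definition unseen_bits ::
  "nat \<Rightarrow> nat \<Rightarrow> (nat \<Rightarrow> (nat \<times> nat) set) \<Rightarrow> (nat \<Rightarrow> nat) \<Rightarrow> (nat \<Rightarrow> nat) \<Rightarrow> (nat \<times> nat) set" where
  "unseen_bits K B S d rank =
     {(d v, t) | v t. v \<in> {1..K} \<and> t < B \<and> (\<forall>w\<in>{1..K}. rank w \<le> rank v \<longrightarrow> (d v, t) \<notin> S w)}"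

definition library_of :: "(nat \<times> nat) set \<Rightarrow> nat \<Rightarrow> nat \<Rightarrow> bool" where
  "library_of A i t \<longleftrightarrow> (i, t) \<in> A"

lemma finite_unseen_bits: "finite (unseen_bits K B S d rank)"
proof (rule finite_subset)
  show "unseen_bits K B S d rank \<subseteq> (\<lambda>(v, t). (d v, t)) ` ({1..K} \<times> {..<B})"
    unfolding unseen_bits_def by auto
qed simp

lemma unseen_bitsI:
  assumes "v \<in> {1..K}" "t < B" "\<forall>w\<in>{1..K}. rank w \<le> rank v \<longrightarrow> (d v, t) \<notin> S w"
  shows "(d v, t) \<in> unseen_bits K B S d rank"
  using assms unfolding unseen_bits_def by blast

lemma unseen_bits_subset:
  assumes "\<forall>k\<in>{1..K}. d k \<in> Dem K a b k"
  shows "unseen_bits K B S d rank \<subseteq> {1..K * (a + b)} \<times> {..<B}"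
  using assms Dem_subset unfolding unseen_bits_def by fastforce

lemma valid_files_library_of: "A \<subseteq> {1..N} \<times> {..<B} \<Longrightarrow> valid_files N B (library_of A)"
  unfolding valid_files_def library_of_def by auto

lemma message_determines_unseen_bits:
  assumes sch: "uncoded_scheme K a b B M L S psi dec"
    and d: "\<forall>k\<in>{1..K}. d k \<in> Dem K a b k"
    and A: "A \<subseteq> unseen_bits K B S d rank" and A': "A' \<subseteq> unseen_bits K B S d rank"
    and msg: "psi d (library_of A) = psi d (library_of A')"
  shows "A = A'"
proof -
  have decodes: "dec v d (cache_content S (library_of X) v) (psi d (library_of X)) t = library_of X (d v) t"
    if "X \<subseteq> unseen_bits K B S d rank" "v \<in> {1..K}" "t < B" for X v t
    using sch d that valid_files_library_of[OF subset_trans[OF that(1) unseen_bits_subset[OF d]]]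
    unfolding uncoded_scheme_def by blast
  have same: "library_of A (d v) t = library_of A' (d v) t" if "v \<in> {1..K}" "t < B" for v t
    using that
  proof (induction "rank v" arbitrary: v t rule: less_induct)
    case less
    have "cache_content S (library_of A) v = cache_content S (library_of A') v"
    proof
      fix p
      show "cache_content S (library_of A) v p = cache_content S (library_of A') v p"
      proof (cases "p \<in> S v \<and> p \<in> unseen_bits K B S d rank")
        case True
        then obtain w t' where p: "p = (d w, t')" "w \<in> {1..K}" "t' < B"
          and unseen: "\<forall>w'\<in>{1..K}. rank w' \<le> rank w \<longrightarrow> p \<notin> S w'"
          unfolding unseen_bits_def by blast
        then have "rank w < rank v" using True less.prems(1) by (meson not_le)
        then show ?thesis using less.hyps p by (simp add: cache_content_def)
      next
        case False
        then show ?thesis using A A' by (auto simp: cache_content_def library_of_def)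
      qed
    qed
    then show ?case using decodes[OF A less.prems] decodes[OF A' less.prems] msg by simp
  qed
  show "A = A'"
  proof (rule set_eqI)
    fix p
    have "p \<in> A \<longleftrightarrow> p \<in> A'" if "p \<in> unseen_bits K B S d rank"
      using that same unfolding unseen_bits_def library_of_def by blast
    then show "p \<in> A \<longleftrightarrow> p \<in> A'" using A A' by blast
  qed
qed

lemma card_unseen_bits_le_load:
  assumes sch: "uncoded_scheme K a b B M L S psi dec"
    and d: "\<forall>k\<in>{1..K}. d k \<in> Dem K a b k"
  shows "card (unseen_bits K B S d rank) \<le> L"
proof (rule card_le_length_if_inj_on_Pow)
  show "finite (unseen_bits K B S d rank)"
    by (rule finite_unseen_bits)
  show "inj_on (\<lambda>A. psi d (library_of A)) (Pow (unseen_bits K B S d rank))"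
    by (rule inj_onI) (use message_determines_unseen_bits[OF sch d] in blast)
  show "length (psi d (library_of A)) = L" if "A \<subseteq> unseen_bits K B S d rank" for A
    using sch d valid_files_library_of[OF subset_trans[OF that unseen_bits_subset[OF d]]]
    unfolding uncoded_scheme_def by blast
qed

definition probe_demand :: "nat \<Rightarrow> nat \<Rightarrow> nat \<Rightarrow> bool \<Rightarrow> nat \<Rightarrow> nat \<Rightarrow> nat" where
  "probe_demand K a b c r v = d1_file a b (if c then v else cyc K (v + 1)) r"

definition probe_offset :: "bool \<Rightarrow> nat \<Rightarrow> int" where
  "probe_offset c v = (if c then - int v else int v)"

definition probe_rank :: "nat \<Rightarrow> bool \<Rightarrow> int \<Rightarrow> nat \<Rightarrow> nat" where
  "probe_rank K c s v = nat ((s + probe_offset c v) mod int K)"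

definition probe_bits ::
  "nat \<Rightarrow> nat \<Rightarrow> nat \<Rightarrow> nat \<Rightarrow> (nat \<Rightarrow> (nat \<times> nat) set) \<Rightarrow> bool \<Rightarrow> int \<Rightarrow> nat \<Rightarrow> (nat \<times> nat) set" where
  "probe_bits K a b B S c s r = unseen_bits K B S (probe_demand K a b c r) (probe_rank K c s)"

definition probe_hits :: "nat \<Rightarrow> nat \<Rightarrow> nat \<Rightarrow> nat \<Rightarrow> (nat \<Rightarrow> (nat \<times> nat) set) \<Rightarrow> nat \<times> nat \<Rightarrow> nat" where
  "probe_hits K a b B S \<beta> =
     (\<Sum>c\<in>UNIV. \<Sum>s\<in>{0..<int K}. \<Sum>r\<in>{1..a}. of_bool (\<beta> \<in> probe_bits K a b B S c s r))"

lemma probe_demand_in_Dem: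
  assumes "v \<in> {1..K}" "r \<in> {1..a}"
  shows "probe_demand K a b c r v \<in> Dem K a b v"
proof -
  have "cyc K (v + 1) \<in> {1..K}" using assms by (intro cyc_in_range) simp
  then show ?thesis
    using assms d1_file_in_D1[of v r a b] d1_file_in_D1[of "cyc K (v + 1)" r a b]
    unfolding probe_demand_def Dem_def D3_def by auto
qed

lemma card_probe_bits_le_load:
  assumes "uncoded_scheme K a b B M L S psi dec" "r \<in> {1..a}"
  shows "card (probe_bits K a b B S c s r) \<le> L"
  unfolding probe_bits_def using assms probe_demand_in_Dem by (intro card_unseen_bits_le_load) auto

lemma C1_demanded_by_probes:
  assumes "i \<in> C1 K a b"
  obtains u v r where "u \<in> {1..K}" "v \<in> {1..K}" "r \<in> {1..a}"
    "probe_demand K a b True r u = i" "probe_demand K a b False r v = i"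
    "int v mod int K = (int u - 1) mod int K"
proof -
  obtain u where u: "u \<in> {1..K}" "i \<in> D1 a b u" using assms unfolding C1_def by blast
  obtain r where "r \<in> {1..a}" "i = d1_file a b u r"
    using D1_eq_d1_file[OF _ u(2)] u(1) by auto
  moreover obtain v where "v \<in> {1..K}" "cyc K (v + 1) = u" "int v mod int K = (int u - 1) mod int K"
    using cyc_predecessor[OF u(1)] .
  ultimately show ?thesis using u that by (simp add: probe_demand_def)
qed

lemma probe_hits_ge_rank_counts:
  assumes r: "r \<in> {1..a}" and u: "u \<in> {1..K}" and v: "v \<in> {1..K}" and t: "t < B"
    and du: "probe_demand K a b True r u = i" and dv: "probe_demand K a b False r v = i"
  shows "card {s \<in> {0..<int K}. \<forall>w\<in>{1..K}. probe_rank K True s w \<le> probe_rank K True s u \<longrightarrow> (i, t) \<notin> S w}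
       + card {s \<in> {0..<int K}. \<forall>w\<in>{1..K}. probe_rank K False s w \<le> probe_rank K False s v \<longrightarrow> (i, t) \<notin> S w}
       \<le> probe_hits K a b B S (i, t)"
proof -
  define hits where "hits c = (\<Sum>s\<in>{0..<int K}. of_bool ((i, t) \<in> probe_bits K a b B S c s r) :: nat)" for c
  have hits_le: "hits c \<le> (\<Sum>s\<in>{0..<int K}. \<Sum>r\<in>{1..a}. of_bool ((i, t) \<in> probe_bits K a b B S c s r))" for c
    unfolding hits_def using r by (intro sum_mono member_le_sum) auto
  have "hits True + hits False \<le> probe_hits K a b B S (i, t)"
    using hits_le[of True] hits_le[of False] unfolding probe_hits_def UNIV_bool by simp
  moreover have count_le: "card {s \<in> {0..<int K}. \<forall>w\<in>{1..K}. probe_rank K c s w \<le> probe_rank K c s x \<longrightarrow> (i, t) \<notin> S w}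
      \<le> hits c" if "x \<in> {1..K}" "probe_demand K a b c r x = i" for c x
    unfolding hits_def probe_bits_def
    using unseen_bitsI[OF that(1) t, where d = "probe_demand K a b c r"] that(2)
    by (auto intro!: card_mono)
  ultimately show ?thesis using count_le[OF u du] count_le[OF v dv] by linarith
qed

lemma card_probe_rank_less:
  assumes "0 < K"
  shows "card {s \<in> {0..<int K}. probe_rank K c s x < probe_rank K c s y}
       = nat ((probe_offset c x - probe_offset c y) mod int K)"
proof -
  have "probe_rank K c s x < probe_rank K c s y
      \<longleftrightarrow> (s + probe_offset c x) mod int K < (s + probe_offset c y) mod int K" for s
    unfolding probe_rank_def by (rule nat_less_eq_zless) (simp add: assms)
  then show ?thesis using card_add_mod_less[of "int K"] assms by simp
qed

lemma card_unseen_ranks_stored_only_at: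
  assumes "j \<in> {1..K}" "stored_only_at K S j \<beta>"
  shows "{s \<in> {0..<int K}. \<forall>w\<in>{1..K}. probe_rank K c s w \<le> probe_rank K c s x \<longrightarrow> \<beta> \<notin> S w}
       = {s \<in> {0..<int K}. probe_rank K c s x < probe_rank K c s j}"
  using assms by (auto simp: stored_only_at_def not_le)

lemma probe_hits_stored_nowhere:
  assumes i: "i \<in> C1 K a b" and t: "t < B" and nowhere: "stored_nowhere K S (i, t)"
  shows "2 * K \<le> probe_hits K a b B S (i, t)"
proof -
  obtain u v r where "u \<in> {1..K}" "v \<in> {1..K}" "r \<in> {1..a}"
    "probe_demand K a b True r u = i" "probe_demand K a b False r v = i"
    using C1_demanded_by_probes[OF i] .
  note hits = probe_hits_ge_rank_counts[OF this(3,1,2) t this(4,5), of S]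
  have "{s \<in> {0..<int K}. \<forall>w\<in>{1..K}. P s w \<longrightarrow> (i, t) \<notin> S w} = {0..<int K}" for P
    using nowhere by (auto simp: stored_nowhere_def)
  then show ?thesis using hits by (simp only: card_atLeastLessThan_int)
qed

lemma probe_hits_stored_only_at:
  assumes i: "i \<in> C1 K a b" and t: "t < B" and only: "j \<in> {1..K}" "stored_only_at K S j (i, t)"
  shows "K - 1 \<le> probe_hits K a b B S (i, t)"
proof -
  obtain u v r where u: "u \<in> {1..K}" and v: "v \<in> {1..K}" and r: "r \<in> {1..a}"
    and du: "probe_demand K a b True r u = i" and dv: "probe_demand K a b False r v = i"
    and uv: "int v mod int K = (int u - 1) mod int K"
    using C1_demanded_by_probes[OF i] .
  have K: "0 < K" using u by simp
  have "(int v - int j) mod int K = (int u - 1 - int j) mod int K"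
    using uv by (metis mod_diff_left_eq)
  then have "nat ((int j - int u) mod int K) + nat ((int v - int j) mod int K) = K - 1"
    using mod_add_mod_minus_one[of "int K" "int j - int u"] K
    by (simp add: algebra_simps nat_add_distrib[symmetric] of_nat_diff)
  then show ?thesis
    using probe_hits_ge_rank_counts[OF r u v t du dv, of S] card_probe_rank_less[OF K]
    unfolding card_unseen_ranks_stored_only_at[OF only]
    by (simp add: probe_offset_def)
qed

lemma probe_hits_lower_bound:
  assumes "i \<in> C1 K a b" "t < B"
  shows "2 * K * of_bool (stored_nowhere K S (i, t))
       + (K - 1) * (\<Sum>j\<in>{1..K}. of_bool (stored_only_at K S j (i, t)))
       \<le> probe_hits K a b B S (i, t)"
proof (cases "\<exists>j\<in>{1..K}. stored_only_at K S j (i, t)")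
  case True
  then obtain j where j: "j \<in> {1..K}" "stored_only_at K S j (i, t)" ..
  then have "(\<Sum>j'\<in>{1..K}. of_bool (stored_only_at K S j' (i, t))) = (\<Sum>j'\<in>{1..K}. of_bool (j' = j) :: nat)"
    by (intro sum.cong) (auto simp: stored_only_at_def)
  moreover have "\<not> stored_nowhere K S (i, t)"
    using j by (auto simp: stored_only_at_def stored_nowhere_def)
  ultimately show ?thesis using probe_hits_stored_only_at[OF assms j] j(1) by simp
next
  case False
  then show ?thesis using probe_hits_stored_nowhere[OF assms] by simp
qed

lemma bits_none_eq_sum: "bits_none K B S i = (\<Sum>t<B. of_bool (stored_nowhere K S (i, t)))"
  unfolding bits_none_def stored_nowhere_def by (simp add: Int_def lessThan_def)

lemma bits_only_eq_sum: "bits_only K B S i j = (\<Sum>t<B. of_bool (stored_only_at K S j (i, t)))"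
  unfolding bits_only_def stored_only_at_def by (simp add: Int_def lessThan_def)

lemma probe_hits_sum_le:
  assumes sch: "uncoded_scheme K a b B M L S psi dec"
  shows "(\<Sum>\<beta>\<in>C1 K a b \<times> {..<B}. probe_hits K a b B S \<beta>) \<le> 2 * K * a * L"
proof -
  let ?X = "C1 K a b \<times> {..<B}"
  have "finite (C1 K a b)" using C1_subset by (rule finite_subset) simp
  then have fin: "finite ?X" by simp
  have "(\<Sum>\<beta>\<in>?X. probe_hits K a b B S \<beta>)
      = (\<Sum>c\<in>UNIV. \<Sum>s\<in>{0..<int K}. \<Sum>r\<in>{1..a}. \<Sum>\<beta>\<in>?X. of_bool (\<beta> \<in> probe_bits K a b B S c s r))"
    unfolding probe_hits_def by (simp only: sum.swap[of _ ?X])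
  also have "\<dots> = (\<Sum>c\<in>UNIV. \<Sum>s\<in>{0..<int K}. \<Sum>r\<in>{1..a}. card (?X \<inter> probe_bits K a b B S c s r))"
    using fin by (simp add: Int_def)
  also have "\<dots> \<le> (\<Sum>c\<in>(UNIV :: bool set). \<Sum>s\<in>{0..<int K}. \<Sum>r\<in>{1..a}. L)"
    by (intro sum_mono order_trans[OF card_mono card_probe_bits_le_load[OF sch]])
      (auto simp: probe_bits_def finite_unseen_bits)
  also have "\<dots> = 2 * K * a * L" by simp
  finally show ?thesis .
qed

lemma weighted_uncached_bits_le_load:
  assumes sch: "uncoded_scheme K a b B M L S psi dec"
  shows "2 * K * (\<Sum>i\<in>C1 K a b. bits_none K B S i)
       + (K - 1) * (\<Sum>i\<in>C1 K a b. \<Sum>j\<in>{1..K}. bits_only K B S i j) \<le> 2 * K * a * L"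
proof -
  have "2 * K * (\<Sum>i\<in>C1 K a b. bits_none K B S i)
       + (K - 1) * (\<Sum>i\<in>C1 K a b. \<Sum>j\<in>{1..K}. bits_only K B S i j)
      = (\<Sum>i\<in>C1 K a b. \<Sum>t<B. 2 * K * of_bool (stored_nowhere K S (i, t))
           + (K - 1) * (\<Sum>j\<in>{1..K}. of_bool (stored_only_at K S j (i, t))))"
    unfolding bits_none_eq_sum bits_only_eq_sum
    by (simp only: sum.distrib sum_distrib_left sum.swap[of _ "{1..K}"])
  also have "\<dots> \<le> (\<Sum>i\<in>C1 K a b. \<Sum>t<B. probe_hits K a b B S (i, t))"
    by (intro sum_mono probe_hits_lower_bound) auto
  also have "\<dots> \<le> 2 * K * a * L"
    using probe_hits_sum_le[OF sch] by (simp add: sum.cartesian_product)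
  finally show ?thesis .
qed

theorem mainTheorem7:
  fixes K a b B L :: nat and M :: real
    and S :: "nat \<Rightarrow> (nat \<times> nat) set"
    and psi :: "(nat \<Rightarrow> nat) \<Rightarrow> (nat \<Rightarrow> nat \<Rightarrow> bool) \<Rightarrow> bool list"
    and dec :: "nat \<Rightarrow> (nat \<Rightarrow> nat) \<Rightarrow> (nat \<times> nat \<Rightarrow> bool) \<Rightarrow> bool list \<Rightarrow> nat \<Rightarrow> bool"
  assumes "K \<ge> 2" and "a \<ge> 1" and "b \<ge> 1" and "B \<ge> 1"
    and "uncoded_scheme K a b B M L S psi dec"
  shows "real L / real B \<ge> alpha0 K a b B S / real a
           + real (K - 1) / (2 * real a * real K) * alpha1 K a b B S"
proof -
  define N0 where "N0 = (\<Sum>i\<in>C1 K a b. bits_none K B S i)"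
  define N1 where "N1 = (\<Sum>i\<in>C1 K a b. \<Sum>j\<in>{1..K}. bits_only K B S i j)"
  have "2 * K * N0 + (K - 1) * N1 \<le> 2 * K * a * L"
    unfolding N0_def N1_def by (rule weighted_uncached_bits_le_load[OF assms(5)])
  then have bound: "2 * real K * real N0 + real (K - 1) * real N1 \<le> 2 * real K * real a * real L"
    by (metis (mono_tags) of_nat_add of_nat_le_iff of_nat_mult of_nat_numeral)
  have pos: "0 < real a" "0 < real K" "0 < real B" using assms by auto
  have "alpha0 K a b B S / real a + real (K - 1) / (2 * real a * real K) * alpha1 K a b B S
      = (2 * real K * real N0 + real (K - 1) * real N1) / (2 * real K * real a * real B)"
    unfolding alpha0_def alpha1_def N0_def N1_def using pos by (simp add: field_simps)
  also have "\<dots> \<le> (2 * real K * real a * real L) / (2 * real K * real a * real B)"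
    using bound pos by (intro divide_right_mono) auto
  also have "\<dots> = real L / real B" using pos by simp
  finally show ?thesis .
qed

end
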